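(* For all sufficiently large $n$ the following holds for $T\sim\mathcal{R}(n,2)$. (1) The probability that there exist $R\subseteq A_1$ with $|R|\ge n/20$, $S\subseteq A_2$ with $|S|\ge n/20$ and a permutation $\pi$ of $V(T)$ such that $L_\pi(T)$ has no edge between $R$ and $S$, is at most $1/n$. (2) For every $D\in\{+,-\}^2$ and every ordered pair $(u,v)$ of two distinct vertices of $T$, $\Pr\left[|C_D((u,v))|\ge 1.1n/4\right]\le 1/n^3$.
   Context: $\mathcal{R}(n,2)$ is the probability space of bipartite tournaments with vertex classes $A_1,A_2$ of size $n$ each, every edge between $A_1$ and $A_2$ oriented independently and uniformly at random. For a permutation (bijection) $\pi:V(T)\to\{1,\ldots,|V(T)|\}$, $L_\pi(T)$ is the spanning subgraph of $T$ consisting of all edges $(u,v)\in E(T)$ with $\pi(u)<\pi(v)$. For $D\in\{+,-\}^d$ and a sequence $A'=(v_1,\ldots,v_d)$ of distinct vertices, $C_D(A')$ is the set of vertices $w$ of $T$ such that for each $j$, $(v_j,w)\in E(T)$ if $D(j)=+$ and $(w,v_j)\in E(T)$ if $D(j)=-$. *)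

theory Defs
  imports Complex_Main "HOL-Library.FuncSet"
begin

text \<open>Vertices of a bipartite tournament in R(n,2): (False,i) is the i-th vertex of A1,
 (True,j) the j-th vertex of A2, for i,j < n.  An outcome is an orientation
 ori :: nat \<times> nat \<Rightarrow> bool, where ori (i,j) = True means the edge is oriented from
 (False,i) to (True,j), and False means from (True,j) to (False,i).\<close>

type_synonym vert = "bool \<times> nat"

definition A1 :: "nat \<Rightarrow> vert set" where
  "A1 n = {(False, i) | i. i < n}"

definition A2 :: "nat \<Rightarrow> vert set" where
  "A2 n = {(True, j) | j. j < n}"

definition verts :: "nat \<Rightarrow> vert set" where
  "verts n = A1 n \<union> A2 n"

definition orients :: "nat \<Rightarrow> (nat \<times> nat \<Rightarrow> bool) set" where
  "orients n = ({..<n} \<times> {..<n}) \<rightarrow>\<^sub>E (UNIV :: bool set)"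

definition edges :: "nat \<Rightarrow> (nat \<times> nat \<Rightarrow> bool) \<Rightarrow> (vert \<times> vert) set" where
  "edges n ori =
     {((False, i), (True, j)) | i j. i < n \<and> j < n \<and> ori (i, j)} \<union>
     {((True, j), (False, i)) | i j. i < n \<and> j < n \<and> \<not> ori (i, j)}"

definition prob_R :: "nat \<Rightarrow> ((nat \<times> nat \<Rightarrow> bool) \<Rightarrow> bool) \<Rightarrow> real" where
  "prob_R n P = real (card {ori \<in> orients n. P ori}) / real (card (orients n))"

definition L_perm :: "nat \<Rightarrow> (nat \<times> nat \<Rightarrow> bool) \<Rightarrow> (vert \<Rightarrow> nat) \<Rightarrow> (vert \<times> vert) set" where
  "L_perm n ori \<pi> = {(u, v) \<in> edges n ori. \<pi> u < \<pi> v}"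

text \<open>C_D(A'): D is a sign vector given as a bool list (True = +, False = -),
  A' a list of vertices of the same length.\<close>
definition C_D :: "nat \<Rightarrow> (nat \<times> nat \<Rightarrow> bool) \<Rightarrow> bool list \<Rightarrow> vert list \<Rightarrow> vert set" where
  "C_D n ori D vs = {w \<in> verts n. \<forall>j < length vs.
      (if D ! j then (vs ! j, w) \<in> edges n ori else (w, vs ! j) \<in> edges n ori)}"

end

theory Submission
  imports Defs "HOL-Real_Asymp.Real_Asymp"
begin

text \<open>
  (1) If L_pi(T) has no edge between R and S, then each of the |R| |S| >= n^2/400 edges
  between R and S points from the later to the earlier endpoint in pi. For fixed (R, S, pi)
  this has probability 2^(-|R| |S|), and there are at most 4^n (2n)^(2n) triples, so a union
  bound suffices.

  (2) C_D((u, v)) is empty unless u and v lie in the same class. Then its size X counts the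
  k < n for which the edges from u and from v to the k-th vertex of the other class have
  prescribed orientations: a binomial variable with mean n/4. The exponential moment
  E (1 + t)^X = (1 + t/4)^n at t = 1/8 and Markov's inequality give
  P(X >= 11n/40) <= (33/32)^n / (9/8)^(11n/40) <= (19/20)^(n/40).
\<close>

lemma A1_iff: "x \<in> A1 n \<longleftrightarrow> fst x = False \<and> snd x < n"
  by (cases x) (auto simp: A1_def)

lemma A2_iff: "x \<in> A2 n \<longleftrightarrow> fst x = True \<and> snd x < n"
  by (cases x) (auto simp: A2_def)

lemma verts_iff: "x \<in> verts n \<longleftrightarrow> snd x < n"
  by (cases x) (auto simp: verts_def A1_iff A2_iff)

lemma edges_iff: "(x, y) \<in> edges n ori \<longleftrightarrow>
   snd x < n \<and> snd y < n \<and>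
   (fst x = False \<and> fst y = True \<and> ori (snd x, snd y) \<or>
    fst x = True \<and> fst y = False \<and> \<not> ori (snd y, snd x))"
  by (cases x; cases y) (auto simp: edges_def)

lemma verts_eq_image: "verts n = Pair False ` {..<n} \<union> Pair True ` {..<n}"
  by (auto simp: verts_iff image_iff)

lemma finite_verts: "finite (verts n)"
  by (simp add: verts_eq_image)

lemma card_verts: "card (verts n) = 2 * n"
  unfolding verts_eq_image by (subst card_Un_disjoint) (auto simp: card_image inj_on_def)

lemma finite_orients: "finite (orients n)"
  by (simp add: orients_def finite_PiE)

lemma card_orients_fixed_on:
  assumes K: "K \<subseteq> {..<n} \<times> {..<n}"
  shows "card {ori \<in> orients n. \<forall>x\<in>K. ori x = h x} = 2 ^ (n * n - card K)"
proof -
  let ?A = "{..<n} \<times> {..<n}"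
  have "bij_betw (\<lambda>ori. restrict ori (?A - K)) {ori \<in> orients n. \<forall>x\<in>K. ori x = h x}
          ((?A - K) \<rightarrow>\<^sub>E (UNIV :: bool set))"
    by (rule bij_betw_byWitness[where f' = "\<lambda>f x. if x \<in> K then h x else f x"])
       (use K in \<open>auto simp: orients_def fun_eq_iff PiE_iff extensional_def\<close>)
  then have "card {ori \<in> orients n. \<forall>x\<in>K. ori x = h x} = 2 ^ card (?A - K)"
    by (simp add: bij_betw_same_card card_PiE)
  also have "card (?A - K) = n * n - card K"
    using K by (simp add: card_Diff_subset finite_subset card_cartesian_product)
  finally show ?thesis .
qed

lemma card_orients: "card (orients n) = 2 ^ (n * n)"
  using card_orients_fixed_on[of "{}" n] by simp

lemma prob_R_fixed_on:
  assumes K: "K \<subseteq> {..<n} \<times> {..<n}"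
  shows "prob_R n (\<lambda>ori. \<forall>x\<in>K. ori x = h x) = (1 / 2) ^ card K"
proof -
  have "card K \<le> n * n"
    using card_mono[OF _ K] by simp
  then have "(2::real) ^ (n * n) = 2 ^ (n * n - card K) * 2 ^ card K"
    by (simp flip: power_add)
  then show ?thesis
    by (simp add: prob_R_def card_orients_fixed_on[OF K] card_orients power_one_over)
qed

lemma prob_R_mono:
  assumes "\<And>ori. ori \<in> orients n \<Longrightarrow> P ori \<Longrightarrow> Q ori"
  shows "prob_R n P \<le> prob_R n Q"
  unfolding prob_R_def
  by (intro divide_right_mono of_nat_mono card_mono) (use assms finite_orients in auto)

lemma prob_R_union_bound:
  assumes "finite I"
  shows "prob_R n (\<lambda>ori. \<exists>z\<in>I. P z ori) \<le> (\<Sum>z\<in>I. prob_R n (P z))"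
proof -
  have "{ori \<in> orients n. \<exists>z\<in>I. P z ori} = (\<Union>z\<in>I. {ori \<in> orients n. P z ori})"
    by blast
  then have "card {ori \<in> orients n. \<exists>z\<in>I. P z ori} \<le> (\<Sum>z\<in>I. card {ori \<in> orients n. P z ori})"
    using card_UN_le[OF assms] by simp
  then show ?thesis
    unfolding prob_R_def sum_divide_distrib[symmetric]
    by (intro divide_right_mono) (simp_all flip: of_nat_sum)
qed

definition expect_R :: "nat \<Rightarrow> ((nat \<times> nat \<Rightarrow> bool) \<Rightarrow> real) \<Rightarrow> real" where
  "expect_R n f = (\<Sum>ori\<in>orients n. f ori) / real (card (orients n))"

lemma expect_R_of_bool: "expect_R n (\<lambda>ori. of_bool (P ori)) = prob_R n P"
  by (simp add: expect_R_def prob_R_def finite_orients Collect_conj_eq Int_commute)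

lemma expect_R_sum: "expect_R n (\<lambda>ori. \<Sum>i\<in>I. f i ori) = (\<Sum>i\<in>I. expect_R n (f i))"
  unfolding expect_R_def by (subst sum.swap) (simp add: sum_divide_distrib)

lemma expect_R_cmult: "expect_R n (\<lambda>ori. c * f ori) = c * expect_R n f"
  by (simp add: expect_R_def sum_distrib_left)

lemma markov_R:
  assumes nonneg: "\<And>ori. ori \<in> orients n \<Longrightarrow> 0 \<le> f ori"
  shows "prob_R n (\<lambda>ori. c \<le> f ori) * c \<le> expect_R n f"
proof -
  have "c * of_bool (c \<le> f ori) \<le> f ori" if "ori \<in> orients n" for ori
    using nonneg[OF that] by simp
  then have "expect_R n (\<lambda>ori. c * of_bool (c \<le> f ori)) \<le> expect_R n f"
    unfolding expect_R_def by (intro divide_right_mono sum_mono) auto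
  then show ?thesis
    by (simp add: expect_R_cmult expect_R_of_bool mult.commute)
qed

definition backward_on :: "nat set \<Rightarrow> nat set \<Rightarrow> (vert \<Rightarrow> nat) \<Rightarrow> (nat \<times> nat \<Rightarrow> bool) \<Rightarrow> bool" where
  "backward_on R S g ori \<longleftrightarrow> (\<forall>(i, j) \<in> R \<times> S. ori (i, j) = (g (True, j) < g (False, i)))"

lemma backward_on_if_no_forward_edge:
  assumes inj: "inj_on \<pi> (verts n)"
    and no_forward: "\<forall>u v. (u, v) \<in> L_perm n ori \<pi> \<longrightarrow> \<not> ((u \<in> R \<and> v \<in> S) \<or> (u \<in> S \<and> v \<in> R))"
    and R: "R \<subseteq> A1 n" and S: "S \<subseteq> A2 n"
  shows "backward_on (snd ` R) (snd ` S) (restrict \<pi> (verts n)) ori"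
proof -
  have "ori (i, j) = (restrict \<pi> (verts n) (True, j) < restrict \<pi> (verts n) (False, i))"
    if iR: "(False, i) \<in> R" and jS: "(True, j) \<in> S" for i j
  proof -
    have "i < n" "j < n"
      using iR jS R S by (auto simp: A1_iff A2_iff)
    moreover have "\<pi> (False, i) \<noteq> \<pi> (True, j)"
      using inj_onD[OF inj, of "(False, i)" "(True, j)"] \<open>i < n\<close> \<open>j < n\<close> by (auto simp: verts_iff)
    ultimately show ?thesis
      using no_forward[rule_format, of "(False, i)" "(True, j)"]
        no_forward[rule_format, of "(True, j)" "(False, i)"] iR jS
      by (cases "ori (i, j)") (auto simp: L_perm_def edges_iff verts_iff linorder_neq_iff)
  qed
  then show ?thesis
    using R S unfolding backward_on_def by (force simp: A1_iff A2_iff)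
qed

lemma prob_R_backward_on:
  assumes "R \<subseteq> {..<n}" "S \<subseteq> {..<n}"
  shows "prob_R n (backward_on R S g) = (1 / 2) ^ (card R * card S)"
proof -
  have "backward_on R S g = (\<lambda>ori. \<forall>x \<in> R \<times> S. ori x = (\<lambda>(i, j). g (True, j) < g (False, i)) x)"
    by (auto simp: fun_eq_iff backward_on_def)
  moreover have "R \<times> S \<subseteq> {..<n} \<times> {..<n}"
    using assms by blast
  ultimately show ?thesis
    by (simp only: prob_R_fixed_on card_cartesian_product)
qed

lemma prob_R_backward_on_large:
  assumes "R \<subseteq> {..<n}" "S \<subseteq> {..<n}" "real n / 20 \<le> real (card R)" "real n / 20 \<le> real (card S)"
  shows "prob_R n (backward_on R S g) \<le> 1 / 2 powr (real n ^ 2 / 400)"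
proof -
  have "real n / 20 * (real n / 20) \<le> real (card R) * real (card S)"
    using assms(3,4) by (intro mult_mono) auto
  then have "2 powr (real n ^ 2 / 400) \<le> 2 powr real (card R * card S)"
    by (intro powr_mono) (auto simp: power2_eq_square)
  then have "1 / 2 powr real (card R * card S) \<le> 1 / 2 powr (real n ^ 2 / 400)"
    by (intro divide_left_mono) auto
  moreover have "(1 / 2 :: real) ^ (card R * card S) = 1 / 2 powr real (card R * card S)"
    by (subst powr_realpow) (simp_all add: power_one_over)
  ultimately show ?thesis
    by (simp only: prob_R_backward_on[OF assms(1,2)])
qed

lemma card_Pow_Pow_orders:
  "card (Pow {..<n} \<times> Pow {..<n} \<times> (verts n \<rightarrow>\<^sub>E {1 .. card (verts n)})) = 4 ^ n * (2 * n) ^ (2 * n)"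
proof -
  have "(2::nat) ^ n * 2 ^ n = 4 ^ n"
    using power_mult_distrib[of "2::nat" 2 n] by simp
  then show ?thesis
    by (simp add: card_cartesian_product card_Pow card_PiE finite_verts card_verts)
qed

lemma prob_R_large_blocked_pair:
  "prob_R n (\<lambda>ori. \<exists>R S \<pi>. R \<subseteq> A1 n \<and> real (card R) \<ge> real n / 20 \<and>
                          S \<subseteq> A2 n \<and> real (card S) \<ge> real n / 20 \<and>
                          bij_betw \<pi> (verts n) {1 .. card (verts n)} \<and>
                          (\<forall>u v. (u, v) \<in> L_perm n ori \<pi> \<longrightarrow>
                              \<not> ((u \<in> R \<and> v \<in> S) \<or> (u \<in> S \<and> v \<in> R))))
     \<le> 4 ^ n * (2 * real n) ^ (2 * n) / 2 powr (real n ^ 2 / 400)"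
  (is "prob_R n ?blocked \<le> _")
proof -
  define G where "G = verts n \<rightarrow>\<^sub>E {1 .. card (verts n)}"
  define I where "I = {(R', S', g) \<in> Pow {..<n} \<times> Pow {..<n} \<times> G.
                        real n / 20 \<le> real (card R') \<and> real n / 20 \<le> real (card S')}"
  have finite_triples: "finite (Pow {..<n} \<times> Pow {..<n} \<times> G)"
    by (simp add: G_def finite_PiE finite_verts)
  then have "finite I"
    by (rule rev_finite_subset) (auto simp: I_def)
  have "card I \<le> card (Pow {..<n} \<times> Pow {..<n} \<times> G)"
    using finite_triples by (intro card_mono) (auto simp: I_def)
  then have "real (card I) \<le> real (4 ^ n * (2 * n) ^ (2 * n))"
    by (simp only: G_def card_Pow_Pow_orders of_nat_le_iff)
  then have card_I: "real (card I) \<le> 4 ^ n * (2 * real n) ^ (2 * n)"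
    by simp
  have "prob_R n ?blocked \<le> prob_R n (\<lambda>ori. \<exists>z\<in>I. case z of (R', S', g) \<Rightarrow> backward_on R' S' g ori)"
  proof (rule prob_R_mono)
    fix ori assume "?blocked ori"
    then obtain R S \<pi> where R: "R \<subseteq> A1 n" "real (card R) \<ge> real n / 20"
      and S: "S \<subseteq> A2 n" "real (card S) \<ge> real n / 20"
      and bij: "bij_betw \<pi> (verts n) {1 .. card (verts n)}"
      and no_forward: "\<forall>u v. (u, v) \<in> L_perm n ori \<pi> \<longrightarrow> \<not> ((u \<in> R \<and> v \<in> S) \<or> (u \<in> S \<and> v \<in> R))"
      by blast
    have "inj_on snd R" "inj_on snd S"
      using R(1) S(1) by (auto simp: inj_on_def A1_iff A2_iff prod_eq_iff)
    then have "(snd ` R, snd ` S, restrict \<pi> (verts n)) \<in> I"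
      using R S bij by (auto simp: I_def G_def card_image A1_iff A2_iff bij_betw_def)
    moreover have "backward_on (snd ` R) (snd ` S) (restrict \<pi> (verts n)) ori"
      using bij no_forward R(1) S(1) by (intro backward_on_if_no_forward_edge) (auto simp: bij_betw_def)
    ultimately show "\<exists>z\<in>I. case z of (R', S', g) \<Rightarrow> backward_on R' S' g ori"
      by force
  qed
  also have "\<dots> \<le> (\<Sum>z\<in>I. prob_R n (\<lambda>ori. case z of (R', S', g) \<Rightarrow> backward_on R' S' g ori))"
    by (rule prob_R_union_bound[OF \<open>finite I\<close>])
  also have "\<dots> \<le> real (card I) * (1 / 2 powr (real n ^ 2 / 400))"
    by (rule sum_bounded_above) (auto simp: I_def intro: prob_R_backward_on_large)
  also have "\<dots> \<le> 4 ^ n * (2 * real n) ^ (2 * n) / 2 powr (real n ^ 2 / 400)"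
    using card_I by (simp add: divide_right_mono)
  finally show ?thesis .
qed

lemma sum_Pow_power:
  fixes x :: "'a :: comm_semiring_1"
  assumes "finite A"
  shows "(\<Sum>X\<in>Pow A. x ^ card X) = (x + 1) ^ card A"
  using prod_add[OF assms, of "\<lambda>_. x" "\<lambda>_. 1"] by simp

lemma prob_R_pairs_fixed:
  assumes inj: "inj_on p {..<n}" "inj_on q {..<n}"
    and disj: "p ` {..<n} \<inter> q ` {..<n} = {}"
    and grid: "p ` {..<n} \<union> q ` {..<n} \<subseteq> {..<n} \<times> {..<n}"
    and K: "K \<subseteq> {..<n}"
  shows "prob_R n (\<lambda>ori. \<forall>k\<in>K. ori (p k) = e1 \<and> ori (q k) = e2) = (1 / 4) ^ card K"
proof -
  define h where "h x = (if x \<in> p ` K then e1 else e2)" for x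
  have pq_disj: "p ` K \<inter> q ` K = {}"
    using disj K by blast
  have "q k \<notin> p ` K" if "k \<in> K" for k
    using pq_disj that by blast
  then have "(\<forall>k\<in>K. ori (p k) = e1 \<and> ori (q k) = e2) \<longleftrightarrow> (\<forall>x \<in> p ` K \<union> q ` K. ori x = h x)" for ori
    by (auto simp: h_def)
  moreover have "card (p ` K \<union> q ` K) = 2 * card K"
    using K pq_disj finite_subset[OF K]
    by (simp add: card_Un_disjoint card_image inj_on_subset[OF inj(1)] inj_on_subset[OF inj(2)])
  moreover have "p ` K \<union> q ` K \<subseteq> {..<n} \<times> {..<n}"
    using K grid by blast
  ultimately show ?thesis
    by (simp add: prob_R_fixed_on power_mult power2_eq_square)
qed

lemma expect_R_power_card_matches:
  assumes "inj_on p {..<n}" "inj_on q {..<n}"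
    and "p ` {..<n} \<inter> q ` {..<n} = {}"
    and "p ` {..<n} \<union> q ` {..<n} \<subseteq> {..<n} \<times> {..<n}"
  shows "expect_R n (\<lambda>ori. (1 + t) ^ card {k. k < n \<and> ori (p k) = e1 \<and> ori (q k) = e2})
           = (1 + t / 4) ^ n"
proof -
  define M where "M ori = {k. k < n \<and> ori (p k) = e1 \<and> ori (q k) = e2}" for ori
  (* Expanding (1 + t)^|M| over the subsets K of M reduces the moment to the
     probabilities of the events K \<subseteq> M, which are 4^-|K| by independence. *)
  have power_eq_sum: "(1 + t) ^ card (M ori) = (\<Sum>K\<in>Pow {..<n}. t ^ card K * of_bool (K \<subseteq> M ori))" for ori
  proof -
    have "Pow {..<n} \<inter> {K. K \<subseteq> M ori} = Pow (M ori)"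
      by (auto simp: M_def)
    moreover have "finite (M ori)"
      by (simp add: M_def)
    ultimately show ?thesis
      by (simp add: sum_Pow_power add.commute)
  qed
  have "expect_R n (\<lambda>ori. (1 + t) ^ card (M ori))
      = (\<Sum>K\<in>Pow {..<n}. t ^ card K * prob_R n (\<lambda>ori. K \<subseteq> M ori))"
    by (simp only: power_eq_sum expect_R_sum expect_R_cmult expect_R_of_bool)
  also have "\<dots> = (\<Sum>K\<in>Pow {..<n}. (t / 4) ^ card K)"
  proof (rule sum.cong[OF refl])
    fix K assume K: "K \<in> Pow {..<n}"
    then have "K \<subseteq> M ori \<longleftrightarrow> (\<forall>k\<in>K. ori (p k) = e1 \<and> ori (q k) = e2)" for ori
      by (auto simp: M_def)
    then have "prob_R n (\<lambda>ori. K \<subseteq> M ori) = (1 / 4) ^ card K"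
      using prob_R_pairs_fixed[OF assms, of K e1 e2] K by simp
    then show "t ^ card K * prob_R n (\<lambda>ori. K \<subseteq> M ori) = (t / 4) ^ card K"
      by (simp add: power_divide)
  qed
  also have "\<dots> = (1 + t / 4) ^ n"
    by (simp add: sum_Pow_power add.commute)
  finally show ?thesis
    by (simp add: M_def)
qed

lemma prob_R_matches_tail:
  assumes "inj_on p {..<n}" "inj_on q {..<n}"
    and "p ` {..<n} \<inter> q ` {..<n} = {}"
    and "p ` {..<n} \<union> q ` {..<n} \<subseteq> {..<n} \<times> {..<n}"
    and t: "0 \<le> t"
  shows "prob_R n (\<lambda>ori. a \<le> real (card {k. k < n \<and> ori (p k) = e1 \<and> ori (q k) = e2}))
           \<le> (1 + t / 4) ^ n / (1 + t) powr a"
proof -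
  define m where "m ori = card {k. k < n \<and> ori (p k) = e1 \<and> ori (q k) = e2}" for ori
  have "prob_R n (\<lambda>ori. a \<le> real (m ori)) \<le> prob_R n (\<lambda>ori. (1 + t) powr a \<le> (1 + t) ^ m ori)"
    by (rule prob_R_mono) (use t in \<open>auto simp flip: powr_realpow intro: powr_mono\<close>)
  also have "\<dots> * (1 + t) powr a \<le> (1 + t / 4) ^ n"
    using markov_R[of n "\<lambda>ori. (1 + t) ^ m ori" "(1 + t) powr a"]
      expect_R_power_card_matches[OF assms(1-4), of t e1 e2] t
    by (simp add: m_def)
  finally show ?thesis
    using t by (simp add: m_def pos_le_divide_eq)
qed

(* The argument of an orientation that orients the edge between (b, i) and (\<not> b, k). *)
definition arc_index :: "bool \<Rightarrow> nat \<Rightarrow> nat \<Rightarrow> nat \<times> nat" where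
  "arc_index b i k = (if b then (k, i) else (i, k))"

lemma C_D_pair_eq:
  "C_D n ori D [u, v] = {w \<in> verts n.
      (if D ! 0 then (u, w) \<in> edges n ori else (w, u) \<in> edges n ori) \<and>
      (if D ! 1 then (v, w) \<in> edges n ori else (w, v) \<in> edges n ori)}"
  unfolding C_D_def by (simp add: less_Suc_eq all_conj_distrib)

lemma edge_endpoints_differ: "(x, y) \<in> edges n ori \<Longrightarrow> fst y = (\<not> fst x)"
  by (auto simp: edges_iff)

lemma C_D_pair_across_classes:
  assumes "fst u \<noteq> fst v"
  shows "C_D n ori D [u, v] = {}"
  using assms by (force simp: C_D_pair_eq split: if_splits dest: edge_endpoints_differ)

lemma C_D_pair_same_class:
  assumes "i < n" "j < n"
  shows "C_D n ori D [(b, i), (b, j)] = Pair (\<not> b) `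
           {k. k < n \<and> ori (arc_index b i k) = (D ! 0 \<noteq> b) \<and> ori (arc_index b j k) = (D ! 1 \<noteq> b)}"
proof -
  have "w \<in> C_D n ori D [(b, i), (b, j)] \<longleftrightarrow> fst w = (\<not> b) \<and> snd w < n \<and>
          ori (arc_index b i (snd w)) = (D ! 0 \<noteq> b) \<and> ori (arc_index b j (snd w)) = (D ! 1 \<noteq> b)" for w
    using assms
    by (cases w; cases b) (auto simp: C_D_pair_eq verts_iff edges_iff arc_index_def)
  then show ?thesis
    by (auto simp: image_iff prod_eq_iff)
qed

lemma realpow_powr: "0 < x \<Longrightarrow> (x ^ m) powr y = x powr (real m * y)"
proof -
  assume "0 < x"
  then have "(x ^ m) powr y = (x powr real m) powr y"
    by (simp add: powr_realpow)
  then show ?thesis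
    by (simp add: powr_powr)
qed

lemma chernoff_constant:
  "(33 / 32 :: real) ^ n / (9 / 8) powr (11 * real n / 40) \<le> (19 / 20) powr (real n / 40)"
proof -
  have a: "(33 / 32 :: real) ^ n = ((33 / 32) ^ 40) powr (real n / 40)"
    using realpow_powr[of "33 / 32" 40 "real n / 40"] by (simp add: powr_realpow)
  have b: "(9 / 8 :: real) powr (11 * real n / 40) = ((9 / 8) ^ 11) powr (real n / 40)"
    using realpow_powr[of "9 / 8" 11 "real n / 40"] by simp
  have "(33 / 32 :: real) ^ n / (9 / 8) powr (11 * real n / 40)
      = ((33 / 32) ^ 40 / (9 / 8) ^ 11) powr (real n / 40)"
    unfolding a b by (rule powr_divide[symmetric])
  also have "\<dots> \<le> (19 / 20) powr (real n / 40)"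
    by (rule powr_mono2) (auto simp: divide_simps)
  finally show ?thesis .
qed

lemma prob_R_C_D_pair_large:
  assumes u: "u \<in> verts n" and v: "v \<in> verts n" and uv: "u \<noteq> v"
  shows "prob_R n (\<lambda>ori. real (card (C_D n ori D [u, v])) \<ge> 1.1 * real n / 4)
           \<le> (19 / 20) powr (real n / 40)"
proof (cases "fst u = fst v")
  case False
  have "0 < n"
    using u by (auto simp: verts_iff)
  then have "prob_R n (\<lambda>ori. real (card (C_D n ori D [u, v])) \<ge> 1.1 * real n / 4) \<le> prob_R n (\<lambda>_. False)"
    by (intro prob_R_mono) (simp add: C_D_pair_across_classes[OF False])
  moreover have "prob_R n (\<lambda>_. False) = 0"
    by (simp add: prob_R_def)
  ultimately show ?thesis
    using powr_ge_zero[of "19 / 20" "real n / 40"] by linarith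
next
  case True
  obtain b i where u_eq: "u = (b, i)"
    by (cases u)
  obtain j where v_eq: "v = (b, j)"
    using True u_eq by (cases v) auto
  have "i \<noteq> j" "i < n" "j < n"
    using u v uv u_eq v_eq by (auto simp: verts_iff)
  moreover have "card (Pair (\<not> b) ` X) = card X" for X :: "nat set"
    by (simp add: card_image inj_on_def)
  ultimately have "prob_R n (\<lambda>ori. real (card (C_D n ori D [u, v])) \<ge> 1.1 * real n / 4)
      = prob_R n (\<lambda>ori. 11 * real n / 40 \<le> real (card
          {k. k < n \<and> ori (arc_index b i k) = (D ! 0 \<noteq> b) \<and> ori (arc_index b j k) = (D ! 1 \<noteq> b)}))"
    by (simp add: u_eq v_eq C_D_pair_same_class)
  also have "\<dots> \<le> (1 + (1 / 8) / 4) ^ n / (1 + 1 / 8) powr (11 * real n / 40)"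
    by (rule prob_R_matches_tail) (use \<open>i \<noteq> j\<close> \<open>i < n\<close> \<open>j < n\<close> in \<open>auto simp: arc_index_def inj_on_def\<close>)
  also have "\<dots> \<le> (19 / 20) powr (real n / 40)"
    using chernoff_constant by simp
  finally show ?thesis .
qed

theorem lemma3p4:
  "\<exists>N. \<forall>n \<ge> N.
     prob_R n (\<lambda>ori. \<exists>R S \<pi>. R \<subseteq> A1 n \<and> real (card R) \<ge> real n / 20 \<and>
                          S \<subseteq> A2 n \<and> real (card S) \<ge> real n / 20 \<and>
                          bij_betw \<pi> (verts n) {1 .. card (verts n)} \<and>
                          (\<forall>u v. (u, v) \<in> L_perm n ori \<pi> \<longrightarrow>
                              \<not> ((u \<in> R \<and> v \<in> S) \<or> (u \<in> S \<and> v \<in> R))))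
       \<le> 1 / real n
   \<and> (\<forall>D u v. length D = 2 \<longrightarrow> u \<in> verts n \<longrightarrow> v \<in> verts n \<longrightarrow> u \<noteq> v \<longrightarrow>
       prob_R n (\<lambda>ori. real (card (C_D n ori D [u, v])) \<ge> 1.1 * real n / 4)
         \<le> 1 / real n ^ 3)"
proof -
  have "\<forall>\<^sub>F n in sequentially.
      4 ^ n * (2 * real n) ^ (2 * n) / 2 powr (real n ^ 2 / 400) \<le> 1 / real n \<and>
      (19 / 20) powr (real n / 40) \<le> 1 / real n ^ 3"
    by (intro eventually_conj; real_asymp)
  then obtain N where N: "\<And>n. N \<le> n \<Longrightarrow>
      4 ^ n * (2 * real n) ^ (2 * n) / 2 powr (real n ^ 2 / 400) \<le> 1 / real n \<and>
      (19 / 20) powr (real n / 40) \<le> 1 / real n ^ 3"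
    unfolding eventually_sequentially by blast
  show ?thesis
    apply (intro exI[of _ N] allI impI conjI)
    subgoal for n
      by (rule order_trans[OF prob_R_large_blocked_pair]) (use N in blast)
    subgoal for n D u v
      by (rule order_trans[OF prob_R_C_D_pair_large]) (use N in auto)
    done
qed

end
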